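(* Let $U\in\mathbb{R}^{n\times d}$, let $\mathbf{x}_*\in\mathbb{R}^d$ be $s$-sparse, $\mathbf{e}\in\mathbb{R}^n$ and $\mathbf{y}=U\mathbf{x}_*+\mathbf{e}$. Let $\mathbf{x}_t$ be an iterate of Algorithm 1 with support $\mathcal{S}_t$, and $\mathcal{S}_*$ the support of $\mathbf{x}_*$. If $|\mathcal{S}_t\setminus\mathcal{S}_*|\le s$, $\|\mathbf{x}_t-\mathbf{x}_*\|_2\le\Delta_t$ and $\lambda_t=\|U^\top\mathbf{e}\|_\infty+\frac{\delta_s+\sqrt2\theta_{s,s}}{\sqrt s}\Delta_t$, then \[ \|\mathbf{x}_{t+1}-\mathbf{x}_*\|_2\le(\delta_s+\sqrt2\theta_{s,s}+\delta_{3s})\Delta_t+(1+\sqrt2)\sqrt s\|U^\top\mathbf{e}\|_\infty . \]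
   Context: $U_{\mathcal T}$ is the column submatrix of $U$ indexed by $\mathcal T$. $\delta_k$ is the smallest constant $\ge0$ with $(1-\delta_k)\|\mathbf{v}\|_2^2\le\|U_{\mathcal T}\mathbf{v}\|_2^2\le(1+\delta_k)\|\mathbf{v}\|_2^2$ for all $|\mathcal T|\le k$, $\mathbf{v}\in\mathbb{R}^{|\mathcal T|}$; $\theta_{s,s}$ (with $2s\le d$) is the smallest constant with $|\langle U_{\mathcal T}\mathbf{v},U_{\mathcal T'}\mathbf{v}'\rangle|\le\theta_{s,s}\|\mathbf{v}\|_2\|\mathbf{v}'\|_2$ for all disjoint $\mathcal T,\mathcal T'$ of size at most $s$. Algorithm 1: $\mathbf{x}_1=0$ and $\mathbf{x}_{t+1}=\mathrm{sign}(\widehat{\mathbf{x}}_t)[|\widehat{\mathbf{x}}_t|-\lambda_t]_+$ with $\widehat{\mathbf{x}}_t=\mathbf{x}_t-U^\top(U\mathbf{x}_t-\mathbf{y})$ (componentwise), for parameters $\lambda_t>0$. *)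

theory Defs
  imports "HOL-Analysis.Analysis"
begin

definition supp :: "real^'d \<Rightarrow> 'd set" where
  "supp x = {i. x $ i \<noteq> 0}"

text \<open>Restricted isometry constant delta_k of U. A vector v in R^|T| fed to the
  column submatrix U_T is identified with the vector of R^d supported in T, so that
  U_T v = U *v v.\<close>
definition rip_const :: "real^'d^'n \<Rightarrow> nat \<Rightarrow> real" where
  "rip_const U k = Inf {c. c \<ge> 0 \<and>
     (\<forall>T v. card T \<le> k \<and> supp v \<subseteq> T \<longrightarrow>
        (1 - c) * (norm v)\<^sup>2 \<le> (norm (U *v v))\<^sup>2 \<and>
        (norm (U *v v))\<^sup>2 \<le> (1 + c) * (norm v)\<^sup>2)}"

definition roc_const :: "real^'d^'n \<Rightarrow> nat \<Rightarrow> real" where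
  "roc_const U s = Inf {c. c \<ge> 0 \<and>
     (\<forall>T T' v v'. card T \<le> s \<and> card T' \<le> s \<and> T \<inter> T' = {} \<and>
        supp v \<subseteq> T \<and> supp v' \<subseteq> T' \<longrightarrow>
        \<bar>(U *v v) \<bullet> (U *v v')\<bar> \<le> c * norm v * norm v')}"

definition soft_thr :: "real \<Rightarrow> real^'d \<Rightarrow> real^'d" where
  "soft_thr lam z = (\<chi> i. sgn (z $ i) * max (\<bar>z $ i\<bar> - lam) 0)"

text \<open>Algorithm 1. Index shift: ista U y lam 0 is the paper's x_1, and
  ista U y lam (Suc t) is obtained from ista U y lam t with threshold lam t.\<close>
primrec ista :: "real^'d^'n \<Rightarrow> real^'n \<Rightarrow> (nat \<Rightarrow> real) \<Rightarrow> nat \<Rightarrow> real^'d" where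
  "ista U y lam 0 = 0"
| "ista U y lam (Suc t) =
     soft_thr (lam t) (ista U y lam t - transpose U *v (U *v ista U y lam t - y))"

end

theory Submission
  imports Defs
begin

(* Write h = x_t - x_*, g = h - U^T U h and E = U^T e, so that Algorithm 1 thresholds
   x_* + g + E at level lambda_t = |E|_inf + c / sqrt s, with c = (delta_s + sqrt 2 theta_{s,s}) Delta.
   An index outside supp x_* and supp x_t survives only if |g_i| > c / sqrt s. Restricting g to
   s such indices gives a vector v orthogonal to h, hence |v|^2 = -<Uv, Uh>, which the restricted
   orthogonality bounds by sqrt 2 theta_{s,s} |v| |h| <= |v| c; but |v| > c. So the new error lives
   on a set T of at most 3s indices, where it is bounded entrywise by |g_i|, plus |E|_inf + lambda_t
   on supp x_*; and |g restricted to T| <= delta_{3s} |h| by the polarized restricted isometry. *)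

lemma le_Inf_nonneg_mult:
  fixes P :: "real \<Rightarrow> bool"
  assumes "0 \<le> c0" "P c0" "0 \<le> m" "\<And>c. 0 \<le> c \<Longrightarrow> P c \<Longrightarrow> a \<le> c * m"
  shows "a \<le> Inf {c. 0 \<le> c \<and> P c} * m"
proof (cases "m = 0")
  case True
  then show ?thesis using assms by auto
next
  case False
  have "a / m \<le> Inf {c. 0 \<le> c \<and> P c}"
    using assms False by (intro cInf_greatest) (auto simp: pos_divide_le_eq)
  then show ?thesis using assms False by (simp add: pos_divide_le_eq)
qed

(* Without these witnesses the infima defining rip_const and roc_const would be taken over
   possibly empty sets, where Inf is unspecified. *)
lemma matrix_rip_witness:
  fixes U :: "real^'d^'n"
  obtains c where "0 \<le> c"
    "\<And>v. (1 - c) * (norm v)\<^sup>2 \<le> (norm (U *v v))\<^sup>2 \<and> (norm (U *v v))\<^sup>2 \<le> (1 + c) * (norm v)\<^sup>2"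
proof -
  obtain K where K: "\<And>v. norm (U *v v) \<le> norm v * K"
    using bounded_linear.pos_bounded[OF matrix_vector_mul_bounded_linear] by blast
  have bound: "(norm (U *v v))\<^sup>2 \<le> K\<^sup>2 * (norm v)\<^sup>2" for v
    using power_mono[OF K[of v] norm_ge_zero] by (simp add: power_mult_distrib mult.commute)
  have "(1 - (1 + K\<^sup>2)) * (norm v)\<^sup>2 \<le> (norm (U *v v))\<^sup>2 \<and>
      (norm (U *v v))\<^sup>2 \<le> (1 + (1 + K\<^sup>2)) * (norm v)\<^sup>2" for v
  proof -
    have "(1 - (1 + K\<^sup>2)) * (norm v)\<^sup>2 \<le> 0"
      by (intro mult_nonpos_nonneg) auto
    moreover have "K\<^sup>2 * (norm v)\<^sup>2 \<le> (1 + (1 + K\<^sup>2)) * (norm v)\<^sup>2"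
      by (intro mult_right_mono) auto
    ultimately show ?thesis
      using bound[of v] zero_le_power2[of "norm (U *v v)"] by linarith
  qed
  then show ?thesis
    by (intro that[of "1 + K\<^sup>2"]) simp_all
qed

lemma matrix_roc_witness:
  fixes U :: "real^'d^'n"
  obtains c where "0 \<le> c" "\<And>v v'. \<bar>(U *v v) \<bullet> (U *v v')\<bar> \<le> c * norm v * norm v'"
proof -
  obtain K where K: "\<And>v. norm (U *v v) \<le> norm v * K" "K > 0"
    using bounded_linear.pos_bounded[OF matrix_vector_mul_bounded_linear] by blast
  have "\<bar>(U *v v) \<bullet> (U *v v')\<bar> \<le> K\<^sup>2 * norm v * norm v'" for v v'
  proof -
    have "\<bar>(U *v v) \<bullet> (U *v v')\<bar> \<le> norm (U *v v) * norm (U *v v')"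
      by (rule Cauchy_Schwarz_ineq2)
    also have "\<dots> \<le> (norm v * K) * (norm v' * K)"
      using K by (intro mult_mono) auto
    finally show ?thesis
      by (simp add: power2_eq_square mult_ac)
  qed
  then show ?thesis
    by (intro that[of "K\<^sup>2"]) simp_all
qed

lemma rip_const_nonneg: "0 \<le> rip_const (U :: real^'d^'n) k"
proof -
  obtain c where "0 \<le> c"
    "\<And>v. (1 - c) * (norm v)\<^sup>2 \<le> (norm (U *v v))\<^sup>2 \<and> (norm (U *v v))\<^sup>2 \<le> (1 + c) * (norm v)\<^sup>2"
    by (metis matrix_rip_witness)
  then show ?thesis
    unfolding rip_const_def using le_Inf_nonneg_mult[of c _ 1 0] by auto
qed

lemma rip_const_bound:
  fixes U :: "real^'d^'n"
  assumes "card T \<le> k" "supp v \<subseteq> T"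
  shows "\<bar>(norm (U *v v))\<^sup>2 - (norm v)\<^sup>2\<bar> \<le> rip_const U k * (norm v)\<^sup>2"
proof -
  obtain c0 where c0: "0 \<le> c0"
    "\<And>v. (1 - c0) * (norm v)\<^sup>2 \<le> (norm (U *v v))\<^sup>2 \<and> (norm (U *v v))\<^sup>2 \<le> (1 + c0) * (norm v)\<^sup>2"
    by (metis matrix_rip_witness)
  show ?thesis
    unfolding rip_const_def
  proof (rule le_Inf_nonneg_mult[of c0])
    fix c assume "\<forall>T v. card T \<le> k \<and> supp v \<subseteq> T \<longrightarrow>
        (1 - c) * (norm v)\<^sup>2 \<le> (norm (U *v v))\<^sup>2 \<and> (norm (U *v v))\<^sup>2 \<le> (1 + c) * (norm v)\<^sup>2"
    then have "(1 - c) * (norm v)\<^sup>2 \<le> (norm (U *v v))\<^sup>2" "(norm (U *v v))\<^sup>2 \<le> (1 + c) * (norm v)\<^sup>2"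
      using assms by blast+
    then show "\<bar>(norm (U *v v))\<^sup>2 - (norm v)\<^sup>2\<bar> \<le> c * (norm v)\<^sup>2"
      by (simp add: abs_le_iff algebra_simps)
  qed (use c0 in auto)
qed

lemma roc_const_nonneg: "0 \<le> roc_const (U :: real^'d^'n) s"
proof -
  obtain c where "0 \<le> c" "\<And>v v'. \<bar>(U *v v) \<bullet> (U *v v')\<bar> \<le> c * norm v * norm v'"
    by (metis matrix_roc_witness)
  then show ?thesis
    unfolding roc_const_def using le_Inf_nonneg_mult[of c _ 1 0] by auto
qed

lemma roc_const_bound:
  fixes U :: "real^'d^'n"
  assumes "card T \<le> s" "card T' \<le> s" "T \<inter> T' = {}" "supp v \<subseteq> T" "supp v' \<subseteq> T'"
  shows "\<bar>(U *v v) \<bullet> (U *v v')\<bar> \<le> roc_const U s * norm v * norm v'"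
proof -
  obtain c where "0 \<le> c" "\<And>v v'. \<bar>(U *v v) \<bullet> (U *v v')\<bar> \<le> c * norm v * norm v'"
    by (metis matrix_roc_witness)
  then show ?thesis
    unfolding roc_const_def mult.assoc using assms
    by (intro le_Inf_nonneg_mult[of c]) (auto simp: mult.assoc)
qed

lemma inner_vector_matrix: "x \<bullet> (y v* A) = (A *v x) \<bullet> (y :: real^'n)"
  by (metis dot_lmul_matrix inner_commute)

lemma orthogonal_if_supp_disjoint: "supp u \<inter> supp v = {} \<Longrightarrow> orthogonal u v"
  unfolding orthogonal_def inner_vec_def supp_def by (intro sum.neutral) auto

lemma orthogonal_norm_add_le:
  fixes u v :: "'a::real_inner"
  assumes "orthogonal u v"
  shows "norm u + norm v \<le> sqrt 2 * norm (u + v)"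
proof (rule power2_le_imp_le)
  have "(norm u + norm v)\<^sup>2 \<le> 2 * ((norm u)\<^sup>2 + (norm v)\<^sup>2)"
    using sum_squares_ge_zero[of "norm u - norm v" 0] by (simp add: power2_eq_square algebra_simps)
  also have "\<dots> = (sqrt 2 * norm (u + v))\<^sup>2"
    using norm_add_Pythagorean[OF assms] by (simp add: power_mult_distrib)
  finally show "(norm u + norm v)\<^sup>2 \<le> (sqrt 2 * norm (u + v))\<^sup>2" .
qed simp

definition restrict_vec :: "'d set \<Rightarrow> real^'d \<Rightarrow> real^'d" where
  "restrict_vec T x = (\<chi> i. if i \<in> T then x $ i else 0)"

lemma supp_restrict_vec: "supp (restrict_vec T x) \<subseteq> T"
  by (auto simp: supp_def restrict_vec_def)

lemma inner_restrict_vec_self: "restrict_vec T x \<bullet> x = (norm (restrict_vec T x))\<^sup>2"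
  unfolding power2_norm_eq_inner inner_vec_def restrict_vec_def by (intro sum.cong) auto

lemma norm_restrict_vec: "norm (restrict_vec T x) = L2_set (\<lambda>i. x $ i) T"
proof -
  have "(\<Sum>i\<in>UNIV. (norm (restrict_vec T x $ i))\<^sup>2) = (\<Sum>i\<in>T. (x $ i)\<^sup>2)"
    by (rule sum.mono_neutral_cong_right) (auto simp: restrict_vec_def)
  then show ?thesis
    by (simp add: norm_vec_def L2_set_def)
qed

lemma abs_soft_thr_nth: "0 \<le> l \<Longrightarrow> \<bar>soft_thr l z $ i\<bar> = max (\<bar>z $ i\<bar> - l) 0"
  by (auto simp: soft_thr_def abs_mult sgn_if)

lemma abs_soft_thr_nth_diff_le: "0 \<le> l \<Longrightarrow> \<bar>soft_thr l z $ i - z $ i\<bar> \<le> l"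
  by (auto simp: soft_thr_def sgn_if max_def)

lemma rip_const_inner_bound:
  fixes U :: "real^'d^'n"
  assumes "card T \<le> k" "supp u \<subseteq> T" "supp h \<subseteq> T"
  shows "\<bar>u \<bullet> h - (U *v u) \<bullet> (U *v h)\<bar> \<le> rip_const U k * norm u * norm h"
proof (cases "u = 0 \<or> h = 0")
  case True
  then show ?thesis by auto
next
  case False
  define B where "B a b = a \<bullet> b - (U *v a) \<bullet> (U *v b)" for a b
  define u1 where "u1 = (1 / norm u) *\<^sub>R u"
  define h1 where "h1 = (1 / norm h) *\<^sub>R h"
  have diag: "\<bar>B a a\<bar> \<le> rip_const U k * (norm a)\<^sup>2" if "supp a \<subseteq> T" for a
    using rip_const_bound[OF assms(1) that, of U]
    by (simp add: B_def power2_norm_eq_inner abs_minus_commute)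
  have "supp (u1 + h1) \<subseteq> supp u \<union> supp h" "supp (u1 - h1) \<subseteq> supp u \<union> supp h"
    by (auto simp: supp_def u1_def h1_def)
  then have "supp (u1 + h1) \<subseteq> T" "supp (u1 - h1) \<subseteq> T"
    using assms(2,3) by auto
  then have "\<bar>B (u1 + h1) (u1 + h1)\<bar> \<le> rip_const U k * (norm (u1 + h1))\<^sup>2"
    "\<bar>B (u1 - h1) (u1 - h1)\<bar> \<le> rip_const U k * (norm (u1 - h1))\<^sup>2"
    using diag by blast+
  then have "\<bar>B (u1 + h1) (u1 + h1) - B (u1 - h1) (u1 - h1)\<bar>
      \<le> rip_const U k * ((norm (u1 + h1))\<^sup>2 + (norm (u1 - h1))\<^sup>2)"
    unfolding distrib_left
    using abs_triangle_ineq4[of "B (u1 + h1) (u1 + h1)" "B (u1 - h1) (u1 - h1)"] by linarith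
  also have "(norm (u1 + h1))\<^sup>2 + (norm (u1 - h1))\<^sup>2 = 2 * (norm u1)\<^sup>2 + 2 * (norm h1)\<^sup>2"
    by (simp add: power2_norm_eq_inner algebra_simps inner_commute)
  also have "\<dots> = 4"
    using False by (simp add: u1_def h1_def)
  also have "B (u1 + h1) (u1 + h1) - B (u1 - h1) (u1 - h1) = 4 * B u1 h1"
    by (simp add: B_def algebra_simps inner_commute)
  finally have "\<bar>B u1 h1\<bar> \<le> rip_const U k"
    by simp
  moreover have "B u h = norm u * norm h * B u1 h1"
    using False by (simp add: B_def u1_def h1_def algebra_simps)
  ultimately show ?thesis
    using mult_left_mono[of "\<bar>B u1 h1\<bar>" "rip_const U k" "norm u * norm h"]
    by (simp add: B_def abs_mult mult_ac)
qed

lemma roc_const_inner_two_blocks: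
  fixes U :: "real^'d^'n"
  assumes "card T \<le> s" "card S \<le> s" "card A \<le> s" "S \<inter> A = {}" "T \<inter> (S \<union> A) = {}"
    and "supp v \<subseteq> T" "supp h \<subseteq> S \<union> A"
  shows "\<bar>(U *v v) \<bullet> (U *v h)\<bar> \<le> sqrt 2 * roc_const U s * norm v * norm h"
proof -
  define h1 h2 where "h1 = restrict_vec S h" and "h2 = restrict_vec A h"
  have split: "h = h1 + h2"
    using assms(4,7) by (auto simp: h1_def h2_def restrict_vec_def supp_def vec_eq_iff)
  have "orthogonal h1 h2"
    using assms(4) supp_restrict_vec[of S h] supp_restrict_vec[of A h]
    by (intro orthogonal_if_supp_disjoint) (auto simp: h1_def h2_def)
  have "T \<inter> S = {}" "T \<inter> A = {}"
    using assms(5) by auto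
  then have "\<bar>(U *v v) \<bullet> (U *v h1)\<bar> \<le> roc_const U s * norm v * norm h1"
    "\<bar>(U *v v) \<bullet> (U *v h2)\<bar> \<le> roc_const U s * norm v * norm h2"
    using roc_const_bound[OF assms(1,2) _ assms(6) supp_restrict_vec]
      roc_const_bound[OF assms(1,3) _ assms(6) supp_restrict_vec]
    by (simp_all add: h1_def h2_def)
  then have "\<bar>(U *v v) \<bullet> (U *v h)\<bar> \<le> roc_const U s * norm v * (norm h1 + norm h2)"
    using abs_triangle_ineq[of "(U *v v) \<bullet> (U *v h1)" "(U *v v) \<bullet> (U *v h2)"]
    by (simp add: split matrix_vector_right_distrib inner_add_right distrib_left)
  also have "\<dots> \<le> roc_const U s * norm v * (sqrt 2 * norm h)"
    using \<open>orthogonal h1 h2\<close>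
    by (intro mult_left_mono) (simp_all add: split orthogonal_norm_add_le roc_const_nonneg)
  finally show ?thesis
    by (simp add: mult_ac)
qed

lemma card_large_residual_entries_le:
  fixes U :: "real^'d^'n"
  assumes "card S \<le> s" "card A \<le> s" "S \<inter> A = {}" "supp h \<subseteq> S \<union> A"
    and "sqrt 2 * roc_const U s * norm h \<le> c"
  shows "card {i. i \<notin> S \<union> A \<and> c / sqrt s < \<bar>(h - transpose U *v (U *v h)) $ i\<bar>} \<le> s"
    (is "card ?L \<le> s")
proof (rule ccontr)
  define g where "g = h - transpose U *v (U *v h)"
  assume "\<not> card ?L \<le> s"
  then have "s \<le> card ?L"
    by simp
  then obtain J where J: "J \<subseteq> ?L" "card J = s" "finite J"
    by (rule obtain_subset_with_card_n)
  have "0 \<le> sqrt 2 * roc_const U s * norm h"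
    by (simp add: roc_const_nonneg)
  then have c0: "0 \<le> c"
    using assms(5) by linarith
  have "0 < s"
  proof (rule ccontr)
    assume "\<not> 0 < s"
    then have "h = 0"
      using assms(1,2,4) by (auto simp: supp_def vec_eq_iff)
    then show False
      using \<open>\<not> card ?L \<le> s\<close> \<open>\<not> 0 < s\<close> by simp
  qed
  define v where "v = restrict_vec J g"
  have "orthogonal v h"
    using J(1) assms(4) supp_restrict_vec[of J g]
    by (intro orthogonal_if_supp_disjoint) (auto simp: v_def)
  then have "(norm v)\<^sup>2 = - ((U *v v) \<bullet> (U *v h))"
    using inner_restrict_vec_self[of J g]
    by (simp add: v_def g_def inner_diff_right inner_vector_matrix orthogonal_def)
  also have "\<dots> \<le> sqrt 2 * roc_const U s * norm v * norm h"
  proof -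
    have "J \<inter> (S \<union> A) = {}"
      using J(1) by auto
    then have "\<bar>(U *v v) \<bullet> (U *v h)\<bar> \<le> sqrt 2 * roc_const U s * norm v * norm h"
      unfolding v_def using J(2) assms(1-4) supp_restrict_vec[of J g]
      by (intro roc_const_inner_two_blocks) auto
    then show ?thesis
      by (simp add: abs_le_iff)
  qed
  also have "\<dots> \<le> norm v * c"
    using mult_left_mono[OF assms(5), of "norm v"] by (simp add: mult_ac)
  finally have "norm v \<le> c"
    using c0 by (cases "norm v = 0") (auto simp: power2_eq_square)
  moreover have "c < norm v"
  proof -
    have "c = L2_set (\<lambda>i. c / sqrt s) J"
      using J(2) \<open>0 < s\<close> c0 by (simp add: L2_set_constant)
    also have "\<dots> < L2_set (\<lambda>i. \<bar>g $ i\<bar>) J"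
      using J \<open>0 < s\<close> c0 by (intro L2_set_strict_mono) (auto simp: g_def)
    also have "\<dots> = norm v"
      by (simp add: v_def norm_restrict_vec L2_set_def)
    finally show ?thesis .
  qed
  ultimately show False
    by simp
qed

lemma residual_large_entries_cover:
  fixes U :: "real^'d^'n"
  assumes "card S \<le> s" "card A \<le> s" "S \<inter> A = {}" "supp h \<subseteq> S \<union> A"
    and "sqrt 2 * roc_const U s * norm h \<le> c"
  obtains T where "card T \<le> 3 * s" "S \<union> A \<subseteq> T"
    "{i. infnorm E + c / sqrt s < \<bar>(h - transpose U *v (U *v h) + E) $ i\<bar>} \<subseteq> T"
proof
  define g where "g = h - transpose U *v (U *v h)"
  define L where "L = {i. i \<notin> S \<union> A \<and> c / sqrt s < \<bar>g $ i\<bar>}"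
  have "card L \<le> s"
    unfolding L_def g_def using assms by (rule card_large_residual_entries_le)
  then show "card (S \<union> A \<union> L) \<le> 3 * s"
    using assms(1,2) card_Un_le[of "S \<union> A" L] card_Un_le[of S A] by simp
  show "{i. infnorm E + c / sqrt s < \<bar>(g + E) $ i\<bar>} \<subseteq> S \<union> A \<union> L"
  proof
    fix i
    assume "i \<in> {i. infnorm E + c / sqrt s < \<bar>(g + E) $ i\<bar>}"
    then have "c / sqrt s < \<bar>g $ i\<bar>"
      using abs_triangle_ineq[of "g $ i" "E $ i"] component_le_infnorm_cart[of E i] by simp
    then show "i \<in> S \<union> A \<union> L"
      by (auto simp: L_def)
  qed
qed simp

lemma norm_restrict_residual_le:
  fixes U :: "real^'d^'n"
  assumes "card T \<le> k" "supp h \<subseteq> T"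
  shows "norm (restrict_vec T (h - transpose U *v (U *v h))) \<le> rip_const U k * norm h"
proof -
  define u where "u = restrict_vec T (h - transpose U *v (U *v h))"
  have "(norm u)\<^sup>2 = u \<bullet> h - (U *v u) \<bullet> (U *v h)"
    using inner_restrict_vec_self[of T "h - transpose U *v (U *v h)"]
    by (simp add: u_def inner_diff_right inner_vector_matrix)
  also have "\<dots> \<le> rip_const U k * norm u * norm h"
    using rip_const_inner_bound[OF assms(1) supp_restrict_vec[of T "h - transpose U *v (U *v h)"] assms(2), of U]
    by (simp add: u_def abs_le_iff)
  finally show ?thesis
    using rip_const_nonneg[of U k]
    by (cases "norm u = 0") (auto simp: u_def power2_eq_square mult.assoc)
qed

lemma norm_soft_thr_error_le:
  fixes xs g E :: "real^'d"
  assumes "card (supp xs) \<le> s" "infnorm E \<le> l"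
    and "supp xs \<subseteq> T" "{i. l < \<bar>(g + E) $ i\<bar>} \<subseteq> T"
  shows "norm (soft_thr l (xs + g + E) - xs) \<le> norm (restrict_vec T g) + sqrt s * (infnorm E + l)"
proof -
  define ev where "ev = soft_thr l (xs + g + E) - xs"
  define a where "a = restrict_vec T g"
  define b where "b = restrict_vec (supp xs) (vec (infnorm E + l))"
  have l0: "0 \<le> l"
    using assms(2) infnorm_pos_le[of E] by linarith
  have "\<bar>ev $ i\<bar> \<le> \<bar>a $ i\<bar> + \<bar>b $ i\<bar>" for i
  proof (cases "i \<in> supp xs")
    case True
    have "ev $ i = (soft_thr l (xs + g + E) $ i - (xs + g + E) $ i) + g $ i + E $ i"
      by (simp add: ev_def)
    then have "\<bar>ev $ i\<bar> \<le> l + \<bar>g $ i\<bar> + infnorm E"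
      using abs_soft_thr_nth_diff_le[OF l0, of "xs + g + E" i] component_le_infnorm_cart[of E i]
      by linarith
    then show ?thesis
      using True assms(3) by (auto simp: a_def b_def restrict_vec_def)
  next
    case False
    then have "\<bar>ev $ i\<bar> = max (\<bar>g $ i + E $ i\<bar> - l) 0"
      using abs_soft_thr_nth[OF l0, of "xs + g + E" i] by (simp add: ev_def supp_def)
    moreover have "\<bar>g $ i + E $ i\<bar> \<le> \<bar>g $ i\<bar> + l"
      using component_le_infnorm_cart[of E i] assms(2) by linarith
    moreover have "\<bar>g $ i + E $ i\<bar> \<le> l" if "i \<notin> T"
    proof (rule ccontr)
      assume "\<not> \<bar>g $ i + E $ i\<bar> \<le> l"
      then have "i \<in> {i. l < \<bar>(g + E) $ i\<bar>}"
        by simp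
      then show False
        using assms(4) that by blast
    qed
    ultimately show ?thesis
      using False assms(4) by (auto simp: a_def b_def restrict_vec_def)
  qed
  then have "norm ev \<le> L2_set (\<lambda>i. \<bar>a $ i\<bar> + \<bar>b $ i\<bar>) UNIV"
    unfolding norm_vec_def by (intro L2_set_mono) auto
  also have "\<dots> \<le> norm a + norm b"
    unfolding norm_vec_def real_norm_def by (rule L2_set_triangle_ineq)
  also have "norm b \<le> sqrt s * (infnorm E + l)"
    using assms(1) l0 infnorm_pos_le[of E]
    by (simp add: b_def norm_restrict_vec L2_set_constant mult_right_mono)
  finally show ?thesis
    by (simp add: ev_def a_def)
qed

lemma ista_Suc_eq_soft_thr_residual:
  fixes U :: "real^'d^'n" and xs :: "real^'d" and y e :: "real^'n" and lam :: "nat \<Rightarrow> real"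
    and t :: nat
  assumes "y = U *v xs + e"
  defines "h \<equiv> ista U y lam t - xs"
  shows "ista U y lam (Suc t)
    = soft_thr (lam t) (xs + (h - transpose U *v (U *v h)) + transpose U *v e)"
  using assms by (simp add: algebra_simps)

theorem proposition3:
  fixes U :: "real^'d^'n" and xs :: "real^'d" and e y :: "real^'n"
    and lam :: "nat \<Rightarrow> real" and s t :: nat and Delta :: real
  assumes "2 * s \<le> CARD('d)"
    and "card (supp xs) \<le> s"
    and "y = U *v xs + e"
    and "\<forall>k. lam k > 0"
    and "card (supp (ista U y lam t) - supp xs) \<le> s"
    and "norm (ista U y lam t - xs) \<le> Delta"
    and "lam t = infnorm (transpose U *v e)
           + (rip_const U s + sqrt 2 * roc_const U s) / sqrt s * Delta"
  shows "norm (ista U y lam (Suc t) - xs)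
         \<le> (rip_const U s + sqrt 2 * roc_const U s + rip_const U (3 * s)) * Delta
           + (1 + sqrt 2) * sqrt s * infnorm (transpose U *v e)"
proof -
  define h where "h = ista U y lam t - xs"
  define g where "g = h - transpose U *v (U *v h)"
  define E where "E = transpose U *v e"
  define c where "c = (rip_const U s + sqrt 2 * roc_const U s) * Delta"
  have lam_t: "lam t = infnorm E + c / sqrt s"
    using assms(7) by (simp add: E_def c_def)
  have h_Delta: "norm h \<le> Delta"
    using assms(6) by (simp add: h_def)
  then have "0 \<le> Delta"
    using norm_ge_zero order_trans by blast
  then have "0 \<le> c"
    by (simp add: c_def rip_const_nonneg roc_const_nonneg)
  have "sqrt 2 * roc_const U s * norm h \<le> sqrt 2 * roc_const U s * Delta"
    using h_Delta by (intro mult_left_mono) (simp_all add: roc_const_nonneg)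
  also have "\<dots> \<le> c"
    using \<open>0 \<le> Delta\<close> by (simp add: c_def distrib_right rip_const_nonneg)
  finally have c_bound: "sqrt 2 * roc_const U s * norm h \<le> c" .
  have supp_h: "supp h \<subseteq> supp xs \<union> (supp (ista U y lam t) - supp xs)"
    by (auto simp: h_def supp_def)
  have "supp xs \<inter> (supp (ista U y lam t) - supp xs) = {}"
    by blast
  obtain T where T: "card T \<le> 3 * s" "supp xs \<union> (supp (ista U y lam t) - supp xs) \<subseteq> T"
      "{i. infnorm E + c / sqrt s < \<bar>(h - transpose U *v (U *v h) + E) $ i\<bar>} \<subseteq> T"
    using assms(2,5) \<open>supp xs \<inter> _ = {}\<close> supp_h c_bound by (rule residual_large_entries_cover)
  have "norm (ista U y lam (Suc t) - xs) \<le> norm (restrict_vec T g) + sqrt s * (infnorm E + lam t)"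
    unfolding ista_Suc_eq_soft_thr_residual[OF assms(3), where lam = lam and t = t, folded h_def g_def E_def]
    using T(1,2) T(3)[folded g_def] \<open>0 \<le> c\<close>
    by (intro norm_soft_thr_error_le assms(2)) (auto simp: lam_t)
  also have "norm (restrict_vec T g) \<le> rip_const U (3 * s) * norm h"
    unfolding g_def using supp_h T(2) by (intro norm_restrict_residual_le T(1)) blast
  also have "\<dots> \<le> rip_const U (3 * s) * Delta"
    using h_Delta by (intro mult_left_mono) (simp_all add: rip_const_nonneg)
  also have "sqrt s * (infnorm E + lam t) \<le> c + (1 + sqrt 2) * sqrt s * infnorm E"
  proof -
    have "sqrt s * (c / sqrt s) \<le> c"
      using \<open>0 \<le> c\<close> by (cases "s = 0") auto
    moreover have "2 * sqrt s * infnorm E \<le> (1 + sqrt 2) * sqrt s * infnorm E"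
      by (intro mult_right_mono infnorm_pos_le) auto
    ultimately show ?thesis
      by (simp add: lam_t algebra_simps)
  qed
  finally show ?thesis
    by (simp add: c_def E_def algebra_simps)
qed

end
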